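(* For every positive integer $t$ and every $\epsilon>0$ there is a positive integer $d$ such that every connected, induced $S_{t,t}$-free bipartite graph $G$ with $\delta(G)\geq d$ whose two parts each have $n$ vertices satisfies $e(G)\geq (1-\epsilon)n^2$.
   Context: For positive integers $a,b$, the $(a,b)$-biclaw $S_{a,b}$ is the graph with vertex set $\{x,x_1,\dots,x_a,y,y_1,\dots,y_b\}$ and edge set $\{xy\}\cup\{xy_1,\dots,xy_b\}\cup\{yx_1,\dots,yx_a\}$. A graph is induced $H$-free if it has no induced subgraph isomorphic to $H$. $\delta(G)$ is the minimum degree and $e(G)$ the number of edges. *)

theory Defs
  imports Complex_Main
begin

definition simple_graph :: "'a set \<Rightarrow> ('a \<Rightarrow> 'a \<Rightarrow> bool) \<Rightarrow> bool" where
  "simple_graph V E \<longleftrightarrow> finite V \<and> (\<forall>u v. E u v \<longrightarrow> E v u) \<and> (\<forall>v. \<not> E v v)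
     \<and> (\<forall>u v. E u v \<longrightarrow> u \<in> V \<and> v \<in> V)"

definition neighbours :: "'a set \<Rightarrow> ('a \<Rightarrow> 'a \<Rightarrow> bool) \<Rightarrow> 'a \<Rightarrow> 'a set" where
  "neighbours V E v = {u \<in> V. E v u}"

definition degree :: "'a set \<Rightarrow> ('a \<Rightarrow> 'a \<Rightarrow> bool) \<Rightarrow> 'a \<Rightarrow> nat" where
  "degree V E v = card (neighbours V E v)"

definition min_degree_ge :: "'a set \<Rightarrow> ('a \<Rightarrow> 'a \<Rightarrow> bool) \<Rightarrow> nat \<Rightarrow> bool" where
  "min_degree_ge V E d \<longleftrightarrow> (\<forall>v\<in>V. d \<le> degree V E v)"

definition edge_set :: "'a set \<Rightarrow> ('a \<Rightarrow> 'a \<Rightarrow> bool) \<Rightarrow> 'a set set" where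
  "edge_set V E = {{u, v} | u v. u \<in> V \<and> v \<in> V \<and> E u v}"

definition num_edges :: "'a set \<Rightarrow> ('a \<Rightarrow> 'a \<Rightarrow> bool) \<Rightarrow> nat" where
  "num_edges V E = card (edge_set V E)"

definition connected_graph :: "'a set \<Rightarrow> ('a \<Rightarrow> 'a \<Rightarrow> bool) \<Rightarrow> bool" where
  "connected_graph V E \<longleftrightarrow> V \<noteq> {} \<and>
     (\<forall>u\<in>V. \<forall>v\<in>V. (\<lambda>a b. a \<in> V \<and> b \<in> V \<and> E a b)\<^sup>*\<^sup>* u v)"

definition bipartite_with :: "'a set \<Rightarrow> ('a \<Rightarrow> 'a \<Rightarrow> bool) \<Rightarrow> 'a set \<Rightarrow> 'a set \<Rightarrow> bool" where
  "bipartite_with V E A B \<longleftrightarrow> A \<union> B = V \<and> A \<inter> B = {} \<and>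
     (\<forall>u v. E u v \<longrightarrow> (u \<in> A \<and> v \<in> B) \<or> (u \<in> B \<and> v \<in> A))"

text \<open>Vertices of the biclaw S_{a,b}: x, y, x_1..x_a, y_1..y_b.\<close>
datatype bc_vertex = BX | BY | BXi nat | BYj nat

definition biclaw_V :: "nat \<Rightarrow> nat \<Rightarrow> bc_vertex set" where
  "biclaw_V a b = {BX, BY} \<union> BXi ` {1..a} \<union> BYj ` {1..b}"

definition biclaw_E0 :: "bc_vertex \<Rightarrow> bc_vertex \<Rightarrow> bool" where
  "biclaw_E0 u v \<longleftrightarrow> (u = BX \<and> v = BY) \<or> (u = BX \<and> (\<exists>j. v = BYj j))
                     \<or> (u = BY \<and> (\<exists>i. v = BXi i))"

definition biclaw_E :: "nat \<Rightarrow> nat \<Rightarrow> bc_vertex \<Rightarrow> bc_vertex \<Rightarrow> bool" where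
  "biclaw_E a b u v \<longleftrightarrow> u \<in> biclaw_V a b \<and> v \<in> biclaw_V a b \<and>
     (biclaw_E0 u v \<or> biclaw_E0 v u)"

definition induced_subgraph_of ::
  "'b set \<Rightarrow> ('b \<Rightarrow> 'b \<Rightarrow> bool) \<Rightarrow> 'a set \<Rightarrow> ('a \<Rightarrow> 'a \<Rightarrow> bool) \<Rightarrow> bool" where
  "induced_subgraph_of VH EH VG EG \<longleftrightarrow>
     (\<exists>f. inj_on f VH \<and> f ` VH \<subseteq> VG \<and>
          (\<forall>u\<in>VH. \<forall>v\<in>VH. EG (f u) (f v) \<longleftrightarrow> EH u v))"

definition induced_biclaw_free :: "nat \<Rightarrow> nat \<Rightarrow> 'a set \<Rightarrow> ('a \<Rightarrow> 'a \<Rightarrow> bool) \<Rightarrow> bool" where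
  "induced_biclaw_free a b V E \<longleftrightarrow> \<not> induced_subgraph_of (biclaw_V a b) (biclaw_E a b) V E"

end

theory Submission
  imports Defs
begin

text \<open>
  Let x be a vertex of maximum degree D and fix m \<approx> 26/\<epsilon>. The heart of the proof is a
  dependent-random-choice argument: for an edge uv, fewer than K = t (2m)^t neighbours w of u
  miss more than about deg v / m neighbours of v, since otherwise t such w have t common
  non-neighbours in N v, and together with u and v these span an induced S_{t,t}.
  Applying this around x produces sets SA \<ni> x and SB such that every vertex of SA has
  fewer than K neighbours outside SB and vice versa. The property of having at most an eighth
  of one's neighbours outside SB (or SA) is passed on along edges, so by connectivity every
  vertex of the side of x has almost all its neighbours in SB and every vertex of the other
  side almost all in SA. Double counting the edges then shows that all but 2Kn/d vertices of
  each side lie in SA resp. SB; as vertices of SA see almost all of N x and D \<ge> (1 - 10/m) |SB|,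
  the number of edges is at least (1 - 3/m)(1 - 10/m) |SA| |SB| \<ge> (1 - \<epsilon>) n^2.
\<close>

lemma sum_card_filter_swap:
  assumes "finite A" "finite B"
  shows "(\<Sum>a\<in>A. card {b\<in>B. r a b}) = (\<Sum>b\<in>B. card {a\<in>A. r a b})"
proof -
  have "card {b\<in>B. r a b} = (\<Sum>b\<in>B. of_bool (r a b))" for a
    using assms(2) by (simp add: Collect_conj_eq Int_commute Collect_mem_eq)
  moreover have "card {a\<in>A. r a b} = (\<Sum>a\<in>A. of_bool (r a b))" for b
    using assms(1) by (simp add: Collect_conj_eq Int_commute Collect_mem_eq)
  ultimately show ?thesis using sum.swap by simp
qed

lemma exists_member_of_many:
  assumes "finite Y" "Y \<noteq> {}" "finite M" "\<forall>p\<in>M. F p \<subseteq> Y"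
  shows "\<exists>y\<in>Y. (\<Sum>p\<in>M. card (F p)) \<le> card Y * card {p\<in>M. y \<in> F p}"
proof (rule ccontr)
  assume "\<not> ?thesis"
  hence "(\<Sum>y\<in>Y. card Y * card {p\<in>M. y \<in> F p}) < (\<Sum>y\<in>Y. \<Sum>p\<in>M. card (F p))"
    using assms(1,2) by (intro sum_strict_mono) auto
  moreover have "(\<Sum>p\<in>M. card (F p)) = (\<Sum>y\<in>Y. card {p\<in>M. y \<in> F p})"
  proof -
    have "F p = {y\<in>Y. y \<in> F p}" if "p \<in> M" for p using assms(4) that by blast
    hence "(\<Sum>p\<in>M. card (F p)) = (\<Sum>p\<in>M. card {y\<in>Y. y \<in> F p})" by (intro sum.cong) auto
    thus ?thesis using sum_card_filter_swap[OF assms(3,1)] by simp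
  qed
  ultimately show False by (simp add: sum_distrib_left)
qed

lemma exists_popular_element:
  assumes "finite Y" "finite M" "\<forall>p\<in>M. F p \<subseteq> Y" "\<forall>p\<in>M. card Y \<le> m * card (F p)"
    and "T \<subseteq> Y" "card T = k" "0 < m" "2 * m * Suc k \<le> card Y"
  shows "\<exists>y\<in>Y - T. card M \<le> 2 * m * card {p\<in>M. y \<in> F p}"
proof -
  have "finite T" using assms(1,5) finite_subset by blast
  hence card_YT: "card (Y - T) = card Y - k" using assms(5,6) by (simp add: card_Diff_subset)
  have "2 * Suc k \<le> 2 * m * Suc k" using assms(7) by (simp del: mult_Suc_right)
  hence "2 * Suc k \<le> card Y" using assms(8) by (rule le_trans)
  hence "k < card Y" by simp
  hence "Y - T \<noteq> {}" using card_YT by (metis card.empty less_numeral_extra(3) zero_less_diff)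
  then obtain y where y: "y \<in> Y - T"
    and many: "(\<Sum>p\<in>M. card (F p - T)) \<le> card (Y - T) * card {p\<in>M. y \<in> F p - T}"
    using exists_member_of_many[of "Y - T" M "\<lambda>p. F p - T"] assms(1-3) by auto
  have "card Y - m * k \<le> m * card (F p - T)" if "p \<in> M" for p
  proof -
    have "m * (card (F p) - k) \<le> m * card (F p - T)"
      using assms(6) diff_card_le_card_Diff[OF \<open>finite T\<close>] by simp
    moreover have "card Y \<le> m * card (F p)" using assms(4) that by blast
    ultimately show ?thesis by (simp add: diff_mult_distrib2)
  qed
  hence sum_ge: "card M * (card Y - m * k) \<le> m * (\<Sum>p\<in>M. card (F p - T))"
    using sum_mono[of M "\<lambda>_. card Y - m * k"] by (simp add: sum_distrib_left)
  have "card (Y - T) \<le> 2 * (card Y - m * k)" using card_YT assms(8) by simp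
  hence "card (Y - T) * card M \<le> 2 * (card M * (card Y - m * k))"
    by (metis mult.assoc mult.commute mult_le_mono1)
  also have "\<dots> \<le> 2 * m * (\<Sum>p\<in>M. card (F p - T))" using sum_ge by simp
  also have "\<dots> \<le> card (Y - T) * (2 * m * card {p\<in>M. y \<in> F p - T})" using many by simp
  finally have "card (Y - T) * card M \<le> card (Y - T) * (2 * m * card {p\<in>M. y \<in> F p - T})" .
  hence "card M \<le> 2 * m * card {p\<in>M. y \<in> F p - T}"
    using \<open>Y - T \<noteq> {}\<close> assms(1) by (simp add: card_gt_0_iff)
  thus ?thesis using y by auto
qed

text \<open>A deterministic form of dependent random choice: T is built greedily, each new element
  lying in at least a 1/(2m) fraction of the sets that still contain T.\<close>

lemma greedy_common_subset:
  assumes "finite Y" "finite M" "\<forall>p\<in>M. F p \<subseteq> Y" "\<forall>p\<in>M. card Y \<le> m * card (F p)"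
    and "0 < m" "2 * m * k \<le> card Y"
  shows "\<exists>T\<subseteq>Y. card T = k \<and> card M \<le> card {p\<in>M. T \<subseteq> F p} * (2 * m) ^ k"
  using assms(6)
proof (induction k)
  case 0
  show ?case by (rule exI[of _ "{}"]) auto
next
  case (Suc k)
  then obtain T where T: "T \<subseteq> Y" "card T = k" "card M \<le> card {p\<in>M. T \<subseteq> F p} * (2 * m) ^ k"
    by auto
  obtain y where y: "y \<in> Y - T"
    and "card {p\<in>M. T \<subseteq> F p} \<le> 2 * m * card {p\<in>{p\<in>M. T \<subseteq> F p}. y \<in> F p}"
    using exists_popular_element[of Y "{p\<in>M. T \<subseteq> F p}" F m T k] assms(1-5) T(1,2) Suc.prems
    by auto
  moreover have "{p\<in>{p\<in>M. T \<subseteq> F p}. y \<in> F p} = {p\<in>M. insert y T \<subseteq> F p}" by auto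
  ultimately have "card M \<le> 2 * m * card {p\<in>M. insert y T \<subseteq> F p} * (2 * m) ^ k"
    using T(3) mult_le_mono1 le_trans by metis
  moreover have "insert y T \<subseteq> Y" "card (insert y T) = Suc k"
    using y T(1,2) finite_subset[OF T(1) assms(1)] by auto
  ultimately show ?case by (intro exI[of _ "insert y T"]) (simp add: algebra_simps)
qed

lemma simple_graph_sym: "simple_graph V E \<Longrightarrow> E a b \<Longrightarrow> E b a"
  unfolding simple_graph_def by blast

lemma simple_graph_irrefl: "simple_graph V E \<Longrightarrow> \<not> E a a"
  unfolding simple_graph_def by blast

lemma simple_graph_edge_vertices: "simple_graph V E \<Longrightarrow> E a b \<Longrightarrow> a \<in> V \<and> b \<in> V"
  unfolding simple_graph_def by blast

lemma simple_graph_finite: "simple_graph V E \<Longrightarrow> finite V"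
  unfolding simple_graph_def by blast

lemma mem_neighbours_iff: "simple_graph V E \<Longrightarrow> w \<in> neighbours V E v \<longleftrightarrow> E v w"
  unfolding neighbours_def simple_graph_def by blast

lemma neighbours_subset: "neighbours V E v \<subseteq> V"
  unfolding neighbours_def by blast

lemma finite_neighbours: "simple_graph V E \<Longrightarrow> finite (neighbours V E v)"
  using neighbours_subset simple_graph_finite finite_subset by metis

lemma mem_biclaw_V [simp]:
  "BX \<in> biclaw_V a b" "BY \<in> biclaw_V a b"
  "BXi i \<in> biclaw_V a b \<longleftrightarrow> 1 \<le> i \<and> i \<le> a"
  "BYj j \<in> biclaw_V a b \<longleftrightarrow> 1 \<le> j \<and> j \<le> b"
  unfolding biclaw_V_def by auto

lemma biclaw_E0_simps [simp]:
  "biclaw_E0 BX BY" "biclaw_E0 BX (BYj j)" "biclaw_E0 BY (BXi i)"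
  "\<not> biclaw_E0 BX BX" "\<not> biclaw_E0 BX (BXi i)" "\<not> biclaw_E0 BY BX" "\<not> biclaw_E0 BY BY"
  "\<not> biclaw_E0 BY (BYj j)" "\<not> biclaw_E0 (BXi i) z" "\<not> biclaw_E0 (BYj j) z"
  unfolding biclaw_E0_def by auto

lemma induced_biclawI:
  assumes "x \<in> V" "y \<in> V" "Xs \<subseteq> V" "Ys \<subseteq> V" "finite Xs" "finite Ys" "card Xs = a" "card Ys = b"
    and distinct: "x \<noteq> y" "x \<notin> Xs" "y \<notin> Xs" "x \<notin> Ys" "y \<notin> Ys" "\<And>p. p \<in> Xs \<Longrightarrow> p \<notin> Ys"
    and "E x y" "E y x" "\<not> E x x" "\<not> E y y"
    and Xs_adj: "\<And>p. p \<in> Xs \<Longrightarrow> E y p \<and> E p y \<and> \<not> E x p \<and> \<not> E p x"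
    and Ys_adj: "\<And>q. q \<in> Ys \<Longrightarrow> E x q \<and> E q x \<and> \<not> E y q \<and> \<not> E q y"
    and Xs_indep: "\<And>p p'. p \<in> Xs \<Longrightarrow> p' \<in> Xs \<Longrightarrow> \<not> E p p'"
    and Ys_indep: "\<And>q q'. q \<in> Ys \<Longrightarrow> q' \<in> Ys \<Longrightarrow> \<not> E q q'"
    and Xs_Ys_indep: "\<And>p q. p \<in> Xs \<Longrightarrow> q \<in> Ys \<Longrightarrow> \<not> E p q \<and> \<not> E q p"
  shows "induced_subgraph_of (biclaw_V a b) (biclaw_E a b) V E"
proof -
  obtain gX gY where gX: "bij_betw gX {1..a} Xs" and gY: "bij_betw gY {1..b} Ys"
    using ex_bij_betw_nat_finite_1 assms(5-8) by metis
  define f where "f z = (case z of BX \<Rightarrow> x | BY \<Rightarrow> y | BXi i \<Rightarrow> gX i | BYj j \<Rightarrow> gY j)" for z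
  have gX_in: "i \<in> {1..a} \<Longrightarrow> gX i \<in> Xs" for i using bij_betw_apply[OF gX] .
  have gY_in: "j \<in> {1..b} \<Longrightarrow> gY j \<in> Ys" for j using bij_betw_apply[OF gY] .
  have gX_eq: "gX i = gX i' \<longleftrightarrow> i = i'" if "i \<in> {1..a}" "i' \<in> {1..a}" for i i'
    using that bij_betw_imp_inj_on[OF gX] by (auto dest: inj_onD)
  have gY_eq: "gY j = gY j' \<longleftrightarrow> j = j'" if "j \<in> {1..b}" "j' \<in> {1..b}" for j j'
    using that bij_betw_imp_inj_on[OF gY] by (auto dest: inj_onD)
  have "inj_on f (biclaw_V a b)"
  proof (rule inj_onI)
    fix p q assume "p \<in> biclaw_V a b" "q \<in> biclaw_V a b" "f p = f q"
    then show "p = q"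
      using distinct gX_in gY_in gX_eq gY_eq by (cases p; cases q) (auto simp: f_def, metis+)
  qed
  moreover have "f ` biclaw_V a b \<subseteq> V"
  proof (rule image_subsetI)
    fix p assume "p \<in> biclaw_V a b"
    thus "f p \<in> V" using assms(1-4) gX_in gY_in by (cases p) (auto simp: f_def)
  qed
  moreover have "E (f p) (f q) \<longleftrightarrow> biclaw_E a b p q"
    if "p \<in> biclaw_V a b" "q \<in> biclaw_V a b" for p q
    using that
    by (cases p; cases q)
      (simp_all add: f_def biclaw_E_def \<open>E x y\<close> \<open>E y x\<close> \<open>\<not> E x x\<close> \<open>\<not> E y y\<close>
        Xs_adj Ys_adj Xs_indep Ys_indep Xs_Ys_indep gX_in gY_in)
  ultimately show ?thesis unfolding induced_subgraph_of_def by blast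
qed

lemma induced_biclaw_from_edge:
  assumes G: "simple_graph V E" and triangle_free: "\<And>a b c. E a c \<Longrightarrow> E b c \<Longrightarrow> \<not> E a b"
    and "E x y"
    and Xs: "Xs \<subseteq> neighbours V E y - {x}" "card Xs = a"
    and Ys: "Ys \<subseteq> neighbours V E x - {y}" "card Ys = b"
    and no_edges: "\<forall>p\<in>Xs. \<forall>q\<in>Ys. \<not> E p q"
  shows "induced_subgraph_of (biclaw_V a b) (biclaw_E a b) V E"
proof (rule induced_biclawI)
  have sym: "\<And>p q. E p q \<Longrightarrow> E q p" using simple_graph_sym[OF G] .
  have Xs_nb: "E y p" "p \<noteq> x" if "p \<in> Xs" for p
    using that Xs(1) mem_neighbours_iff[OF G] by auto
  have Ys_nb: "E x q" "q \<noteq> y" if "q \<in> Ys" for q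
    using that Ys(1) mem_neighbours_iff[OF G] by auto
  show "x \<in> V" "y \<in> V" using simple_graph_edge_vertices[OF G \<open>E x y\<close>] by blast+
  show "Xs \<subseteq> V" "Ys \<subseteq> V" using Xs(1) Ys(1) neighbours_subset by fast+
  show "finite Xs" "finite Ys"
    using Xs(1) Ys(1) finite_neighbours[OF G] finite_subset by (metis Diff_subset subset_trans)+
  show "card Xs = a" "card Ys = b" by fact+
  show "E x y" "E y x" "\<not> E x x" "\<not> E y y"
    using \<open>E x y\<close> sym simple_graph_irrefl[OF G] by blast+
  show "x \<noteq> y" "x \<notin> Xs" "y \<notin> Xs" "x \<notin> Ys" "y \<notin> Ys"
    using simple_graph_irrefl[OF G] \<open>E x y\<close> Xs_nb Ys_nb by metis+
  show "p \<notin> Ys" if "p \<in> Xs" for p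
    using that \<open>E x y\<close> Xs_nb(1) Ys_nb(1) triangle_free sym by blast
  show "E y p \<and> E p y \<and> \<not> E x p \<and> \<not> E p x" if "p \<in> Xs" for p
    using that Xs_nb triangle_free sym \<open>E x y\<close> by blast
  show "E x q \<and> E q x \<and> \<not> E y q \<and> \<not> E q y" if "q \<in> Ys" for q
    using that Ys_nb triangle_free sym \<open>E x y\<close> by blast
  show "\<not> E p p'" if "p \<in> Xs" "p' \<in> Xs" for p p'
    using that Xs_nb triangle_free sym by blast
  show "\<not> E q q'" if "q \<in> Ys" "q' \<in> Ys" for q q'
    using that Ys_nb triangle_free sym by blast
  show "\<not> E p q \<and> \<not> E q p" if "p \<in> Xs" "q \<in> Ys" for p q
    using that no_edges sym by blast
qed

locale triangle_free_biclaw_free_graph =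
  fixes V :: "'a set" and E :: "'a \<Rightarrow> 'a \<Rightarrow> bool" and t m :: nat
  assumes simple: "simple_graph V E"
    and triangle_free: "\<And>a b c. E a c \<Longrightarrow> E b c \<Longrightarrow> \<not> E a b"
    and biclaw_free: "induced_biclaw_free t t V E"
    and m_pos: "0 < m"
begin

abbreviation N :: "'a \<Rightarrow> 'a set" where "N \<equiv> neighbours V E"
abbreviation deg :: "'a \<Rightarrow> nat" where "deg \<equiv> degree V E"
definition K :: nat where "K = t * (2 * m) ^ t"

definition close :: "'a \<Rightarrow> 'a \<Rightarrow> bool" where
  "close v w \<longleftrightarrow> m * card (N v - N w) \<le> deg v + m"

lemma finite_V: "finite V" using simple_graph_finite[OF simple] .
lemma finite_N: "finite (N v)" using finite_neighbours[OF simple] .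
lemma N_subset: "N v \<subseteq> V" using neighbours_subset .
lemma mem_N_iff: "w \<in> N v \<longleftrightarrow> E v w" using mem_neighbours_iff[OF simple] .
lemma edge_sym: "E a b \<Longrightarrow> E b a" using simple_graph_sym[OF simple] .
lemma edge_vertices: "E a b \<Longrightarrow> a \<in> V \<and> b \<in> V" using simple_graph_edge_vertices[OF simple] .

text \<open>If K neighbours of u were not close to v, then greedy_common_subset would give t of them
  with t common non-neighbours in N v - {u}, i.e. an induced S_{t,t} on the edge uv.\<close>

lemma card_not_close_neighbours_less:
  assumes "E u v" and deg_v: "2 * t * m < deg v"
  shows "card {w \<in> N u. \<not> close v w} < K"
proof (rule ccontr)
  define M where "M = {w \<in> N u. \<not> close v w}"
  define Y where "Y = N v - {u}"
  define F where "F w = Y - N w" for w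
  assume "\<not> card {w \<in> N u. \<not> close v w} < K"
  hence "t * (2 * m) ^ t \<le> card M" by (simp add: M_def K_def)
  have "u \<in> N v" using \<open>E u v\<close> edge_sym mem_N_iff by blast
  hence card_Y: "card Y = deg v - 1" using finite_N by (simp add: Y_def degree_def)
  have "card Y \<le> m * card (F w)" if "w \<in> M" for w
  proof -
    have "N v - N w \<subseteq> insert u (F w)" by (auto simp: F_def Y_def)
    hence "card (N v - N w) \<le> Suc (card (F w))"
      using finite_N card_mono[of "insert u (F w)"] card_insert_le_m1 by (fastforce simp: F_def Y_def)
    hence "m * card (N v - N w) \<le> m * card (F w) + m" by (metis add.commute mult_Suc_right mult_le_mono2)
    moreover have "deg v + m < m * card (N v - N w)" using that by (simp add: M_def close_def)
    ultimately show ?thesis using card_Y by linarith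
  qed
  moreover have "2 * m * t \<le> card Y" using card_Y deg_v by (simp add: mult.commute mult.left_commute)
  ultimately obtain T where T: "T \<subseteq> Y" "card T = t" "card M \<le> card {w\<in>M. T \<subseteq> F w} * (2 * m) ^ t"
    using greedy_common_subset[of Y M F m t] finite_N m_pos by (auto simp: Y_def M_def F_def)
  have "t * (2 * m) ^ t \<le> card {w\<in>M. T \<subseteq> F w} * (2 * m) ^ t" using \<open>t * (2 * m) ^ t \<le> card M\<close> T(3) by linarith
  hence "t \<le> card {w\<in>M. T \<subseteq> F w}" using m_pos by simp
  then obtain S where S: "S \<subseteq> {w\<in>M. T \<subseteq> F w}" "card S = t" by (meson obtain_subset_with_card_n)
  have "v \<notin> M" by (simp add: M_def close_def)
  hence "S \<subseteq> N u - {v}" using S(1) by (auto simp: M_def)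
  moreover have "T \<subseteq> N v - {u}" using T(1) by (simp add: Y_def)
  moreover have "\<forall>p\<in>T. \<forall>q\<in>S. \<not> E p q"
    using S(1) mem_N_iff edge_sym by (fastforce simp: F_def)
  ultimately have "induced_subgraph_of (biclaw_V t t) (biclaw_E t t) V E"
    using induced_biclaw_from_edge[of V E u v T t S t] simple triangle_free \<open>E u v\<close> T(2) S(2)
    by blast
  thus False using biclaw_free by (simp add: induced_biclaw_free_def)
qed

lemma exists_close_neighbour:
  assumes "E u v" "2 * t * m < deg v" "Z \<subseteq> N u" "K \<le> card Z"
  shows "\<exists>w\<in>Z. close v w"
proof (rule ccontr)
  assume "\<not> ?thesis"
  hence "Z \<subseteq> {w \<in> N u. \<not> close v w}" using assms(3) by auto
  hence "card Z \<le> card {w \<in> N u. \<not> close v w}" using finite_N by (intro card_mono) auto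
  thus False using card_not_close_neighbours_less[OF assms(1,2)] assms(4) by linarith
qed

lemma card_neighbours_outside_less:
  assumes "E u v" "2 * t * m < deg v" "\<And>w. w \<in> N u \<Longrightarrow> close v w \<Longrightarrow> w \<in> G"
  shows "card (N u - G) < K"
proof -
  have "N u - G \<subseteq> {w \<in> N u. \<not> close v w}" using assms(3) by blast
  hence "card (N u - G) \<le> card {w \<in> N u. \<not> close v w}" using finite_N by (intro card_mono) auto
  thus ?thesis using card_not_close_neighbours_less[OF assms(1,2)] by linarith
qed

end

lemma card_Diff_triangle:
  assumes "finite A" "finite B"
  shows "card (A - C) \<le> card (A - B) + card (B - C)"
proof -
  have "card (A - C) \<le> card ((A - B) \<union> (B - C))" using assms by (intro card_mono) auto
  also have "\<dots> \<le> card (A - B) + card (B - C)" by (rule card_Un_le)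
  finally show ?thesis .
qed

lemma double_count_edges:
  assumes "simple_graph V E" "finite A" "finite B"
    and "\<forall>a\<in>A. c \<le> s * card (neighbours V E a \<inter> B)"
    and "\<forall>b\<in>B. card (neighbours V E b \<inter> A) \<le> k"
  shows "c * card A \<le> s * k * card B"
proof -
  have "neighbours V E a \<inter> B = {b\<in>B. E a b}" "neighbours V E b \<inter> A = {a\<in>A. E a b}" for a b
    using mem_neighbours_iff[OF assms(1)] simple_graph_sym[OF assms(1)] by blast+
  hence "(\<Sum>a\<in>A. card (neighbours V E a \<inter> B)) = (\<Sum>b\<in>B. card (neighbours V E b \<inter> A))"
    using sum_card_filter_swap[OF assms(2,3)] by simp
  also have "\<dots> \<le> k * card B" using sum_mono[of B _ "\<lambda>_. k"] assms(5) by (simp add: mult.commute)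
  finally have "s * (\<Sum>a\<in>A. card (neighbours V E a \<inter> B)) \<le> s * k * card B" by simp
  moreover have "c * card A \<le> s * (\<Sum>a\<in>A. card (neighbours V E a \<inter> B))"
    using sum_mono[of A "\<lambda>_. c"] assms(4) by (simp add: sum_distrib_left mult.commute)
  ultimately show ?thesis by linarith
qed

locale max_degree_vertex = triangle_free_biclaw_free_graph +
  fixes d :: nat and x :: 'a
  assumes m_ge: "16 \<le> m"
    and min_degree: "min_degree_ge V E d"
    and d_gt: "2 * t * m < d" and d_ge_m: "2 * m \<le> d" and d_ge_K: "16 * (t * (2 * m) ^ t + 1) \<le> d"
    and x_in_V: "x \<in> V" and degree_le_x: "\<And>v. v \<in> V \<Longrightarrow> deg v \<le> deg x"
begin

abbreviation D :: nat where "D \<equiv> deg x"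

text \<open>SA and SB are the two sides of the almost complete bipartite subgraph; A0 and Q' are
  auxiliary, and TA, TB only serve to spread the structure over G by connectivity.\<close>

definition A0 :: "'a set" where "A0 = {a \<in> V. close x a}"
definition Q' :: "'a set" where "Q' = {q \<in> N x. m * card (A0 - N q) \<le> 8 * card A0}"
definition SA :: "'a set" where "SA = {a \<in> V. m * card (N x - N a) \<le> 3 * D}"
definition SB :: "'a set" where "SB = {b \<in> V. m * card (A0 - N b) \<le> 10 * card A0}"
definition TA :: "'a set" where "TA = {a \<in> V. 8 * card (N a - SB) \<le> deg a}"
definition TB :: "'a set" where "TB = {b \<in> V. 8 * card (N b - SA) \<le> deg b}"

lemma d_ge_16K: "16 * K + 16 \<le> d" using d_ge_K by (simp add: K_def)

lemma degree_ge: "v \<in> V \<Longrightarrow> d \<le> deg v"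
  using min_degree by (simp add: min_degree_ge_def)

lemma degree_gt: "v \<in> V \<Longrightarrow> 2 * t * m < deg v"
  using degree_ge d_gt by (meson less_le_trans)

lemma D_ge: "2 * m \<le> D" using degree_ge[OF x_in_V] d_ge_m by linarith

lemma finite_A0: "finite A0" using finite_V by (simp add: A0_def)

lemma x_in_A0: "x \<in> A0" using x_in_V by (simp add: A0_def close_def)

lemma A0_subset_SA: "A0 \<subseteq> SA"
  using D_ge by (auto simp: A0_def SA_def close_def)

lemma card_N_minus_A0_less: "q \<in> N x \<Longrightarrow> card (N q - A0) < K"
  using card_neighbours_outside_less[of q x A0] degree_gt[OF x_in_V] edge_sym mem_N_iff
    edge_vertices by (auto simp: A0_def)

lemma degree_N_x_less: "q \<in> N x \<Longrightarrow> deg q < card A0 + K"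
proof -
  assume "q \<in> N x"
  have "deg q = card (N q \<inter> A0) + card (N q - A0)"
    using card_Int_Diff[OF finite_N] by (simp add: degree_def)
  thus ?thesis
    using card_N_minus_A0_less[OF \<open>q \<in> N x\<close>] card_mono[OF finite_A0, of "N q \<inter> A0"] by auto
qed

lemma card_A0_ge: "K + m \<le> card A0"
proof -
  obtain q where "q \<in> N x"
    using degree_ge[OF x_in_V] d_ge_m m_ge by (fastforce simp: degree_def)
  hence "d \<le> deg q" using degree_ge N_subset by blast
  thus ?thesis using degree_N_x_less[OF \<open>q \<in> N x\<close>] d_ge_m d_ge_16K by linarith
qed

lemma card_N_x_minus_Q'_le: "8 * card (N x - Q') \<le> D + m"
proof -
  have "A0 - N q = {a\<in>A0. \<not> E a q}" for q
    using edge_sym by (auto simp: A0_def mem_N_iff)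
  moreover have "N x - N a = {q\<in>N x. \<not> E a q}" for a
    using mem_N_iff by auto
  ultimately have swap: "(\<Sum>a\<in>A0. card (N x - N a)) = (\<Sum>q\<in>N x. card (A0 - N q))"
    using sum_card_filter_swap[OF finite_A0 finite_N] by simp
  have "card (N x - Q') * (8 * card A0) = (\<Sum>q\<in>N x - Q'. 8 * card A0)" by simp
  also have "\<dots> \<le> (\<Sum>q\<in>N x - Q'. m * card (A0 - N q))" by (rule sum_mono) (auto simp: Q'_def)
  also have "\<dots> \<le> m * (\<Sum>q\<in>N x. card (A0 - N q))"
    using finite_N by (simp add: sum_distrib_left sum_mono2)
  also have "\<dots> = (\<Sum>a\<in>A0. m * card (N x - N a))" by (simp only: swap[symmetric] sum_distrib_left)
  also have "\<dots> \<le> card A0 * (D + m)"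
    using sum_mono[of A0 _ "\<lambda>_. D + m"] by (simp add: A0_def close_def)
  finally show ?thesis using card_A0_ge m_ge by (simp add: mult.commute mult.left_commute)
qed

lemma SA_has_neighbour_in_Q':
  assumes "a \<in> SA"
  obtains q where "q \<in> Q'" "q \<in> N a"
proof -
  have "m * (8 * (card (N x - N a) + card (N x - Q'))) \<le> 24 * D + m * (D + m)"
    using assms mult_le_mono2[OF card_N_x_minus_Q'_le, of m] by (simp add: SA_def algebra_simps)
  also have "\<dots> < m * (8 * D)"
  proof -
    have "m * m \<le> m * D" "16 * D \<le> m * D" using D_ge m_ge by simp_all
    moreover have "m * (D + m) = m * D + m * m" "m * (8 * D) = 8 * (m * D)" by (simp_all add: algebra_simps)
    ultimately show ?thesis using D_ge m_ge by linarith
  qed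
  finally have "card (N x - N a) + card (N x - Q') < card (N x)" by (simp add: degree_def)
  moreover have "card (N x) \<le> card (N x - N a) + card (N x - Q')"
    if "N x \<subseteq> (N x - N a) \<union> (N x - Q')"
    using card_mono[OF _ that] finite_N card_Un_le le_trans by blast
  ultimately show ?thesis using that by (auto simp: Q'_def)
qed

lemma card_N_minus_SB_less:
  assumes "a \<in> SA"
  shows "card (N a - SB) < K"
proof -
  obtain q where q: "q \<in> Q'" "q \<in> N a" using SA_has_neighbour_in_Q'[OF assms] .
  show ?thesis
  proof (rule card_neighbours_outside_less)
    show "E a q" using q(2) mem_N_iff by blast
    show "2 * t * m < deg q" using degree_gt q(2) N_subset by blast
    fix w assume "w \<in> N a" "close q w"
    have "m * card (A0 - N w) \<le> m * card (A0 - N q) + m * card (N q - N w)"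
      using card_Diff_triangle[OF finite_A0 finite_N[of q], of "N w"] by (metis add_mult_distrib2 mult_le_mono2)
    also have "\<dots> \<le> 8 * card A0 + (deg q + m)"
      using q(1) \<open>close q w\<close> by (simp add: Q'_def close_def)
    also have "\<dots> \<le> 10 * card A0"
      using card_A0_ge degree_N_x_less[of q] q(1) by (simp add: Q'_def)
    finally show "w \<in> SB" using \<open>w \<in> N a\<close> N_subset by (auto simp: SB_def)
  qed
qed

lemma SB_has_neighbour_in_A0:
  assumes "b \<in> SB"
  obtains a where "a \<in> A0" "a \<in> N b"
proof -
  have "A0 - N b \<noteq> A0"
  proof
    assume "A0 - N b = A0"
    hence "m * card A0 \<le> 10 * card A0" using assms by (simp add: SB_def)
    thus False using card_A0_ge m_ge by simp
  qed
  thus ?thesis using that by blast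
qed

lemma card_N_minus_SA_less:
  assumes "b \<in> SB"
  shows "card (N b - SA) < K"
proof -
  obtain a where "a \<in> A0" "a \<in> N b" using SB_has_neighbour_in_A0[OF assms] .
  show ?thesis
  proof (rule card_neighbours_outside_less)
    show "E b a" using \<open>a \<in> N b\<close> mem_N_iff by blast
    show "2 * t * m < deg a" using degree_gt \<open>a \<in> N b\<close> N_subset by blast
    fix w assume "w \<in> N b" "close a w"
    have "m * card (N x - N w) \<le> m * card (N x - N a) + m * card (N a - N w)"
      using card_Diff_triangle[OF finite_N finite_N[of a], of x "N w"]
      by (metis add_mult_distrib2 mult_le_mono2)
    also have "\<dots> \<le> (D + m) + (deg a + m)"
      using \<open>a \<in> A0\<close> \<open>close a w\<close> by (simp add: A0_def close_def)
    also have "\<dots> \<le> 3 * D" using degree_le_x[of a] \<open>a \<in> A0\<close> D_ge by (simp add: A0_def)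
    finally show "w \<in> SA" using \<open>w \<in> N b\<close> N_subset by (auto simp: SA_def)
  qed
qed

text \<open>At least K neighbours of a lie in S', and one of them is close to b.\<close>

lemma few_neighbours_outside_propagate:
  assumes "\<forall>w\<in>S'. card (N w - S) < K" "a \<in> V" "8 * card (N a - S') \<le> deg a" "E a b"
  shows "8 * card (N b - S) \<le> deg b"
proof -
  have "deg a = card (N a \<inter> S') + card (N a - S')"
    using card_Int_Diff[OF finite_N] by (simp add: degree_def)
  hence "7 * deg a \<le> 8 * card (N a \<inter> S')" using assms(3) by linarith
  moreover have "16 * K + 16 \<le> deg a" using degree_ge[OF assms(2)] d_ge_16K by linarith
  ultimately have "K \<le> card (N a \<inter> S')" by simp
  moreover have "b \<in> V" using edge_vertices assms(4) by blast
  ultimately obtain w where w: "w \<in> N a \<inter> S'" "close b w"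
    using exists_close_neighbour[OF assms(4) degree_gt, of "N a \<inter> S'"] by blast
  have "16 * card (N b - N w) \<le> deg b + 16"
  proof -
    have "16 * (card (N b - N w) - 1) \<le> m * (card (N b - N w) - 1)" using m_ge by simp
    also have "\<dots> \<le> deg b" using \<open>close b w\<close> by (simp add: close_def diff_mult_distrib2)
    finally show ?thesis by (simp add: diff_mult_distrib2)
  qed
  moreover have "card (N b - S) \<le> card (N b - N w) + card (N w - S)"
    by (rule card_Diff_triangle[OF finite_N finite_N])
  moreover have "card (N w - S) < K" using assms(1) w(1) by blast
  moreover have "16 * K + 16 \<le> deg b" using degree_ge[OF \<open>b \<in> V\<close>] d_ge_16K by linarith
  ultimately show ?thesis by linarith
qed

lemma SA_subset_TA: "SA \<subseteq> TA"
proof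
  fix a assume "a \<in> SA"
  hence "a \<in> V" by (simp add: SA_def)
  hence "8 * card (N a - SB) \<le> deg a"
    using card_N_minus_SB_less[OF \<open>a \<in> SA\<close>] degree_ge[of a] d_ge_16K by linarith
  thus "a \<in> TA" using \<open>a \<in> V\<close> by (simp add: TA_def)
qed

lemma TA_TB_edge: "a \<in> TA \<Longrightarrow> E a b \<Longrightarrow> b \<in> TB"
  using few_neighbours_outside_propagate[of SB SA a b] card_N_minus_SA_less edge_vertices
  by (auto simp: TA_def TB_def)

lemma TB_TA_edge: "b \<in> TB \<Longrightarrow> E b a \<Longrightarrow> a \<in> TA"
  using few_neighbours_outside_propagate[of SA SB b a] card_N_minus_SB_less edge_vertices
  by (auto simp: TA_def TB_def)

lemma d_le_twice_card_N_Int: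
  assumes "v \<in> V" "8 * card (N v - S) \<le> deg v"
  shows "d \<le> 2 * card (N v \<inter> S)"
proof -
  have "deg v = card (N v \<inter> S) + card (N v - S)"
    using card_Int_Diff[OF finite_N] by (simp add: degree_def)
  thus ?thesis using assms(2) degree_ge[OF assms(1)] by linarith
qed

lemma connected_subset_TA_TB:
  assumes "connected_graph V E"
  shows "V \<subseteq> TA \<union> TB"
proof
  fix v assume "v \<in> V"
  hence "(\<lambda>a b. a \<in> V \<and> b \<in> V \<and> E a b)\<^sup>*\<^sup>* x v"
    using assms x_in_V by (simp add: connected_graph_def)
  thus "v \<in> TA \<union> TB"
  proof (induction rule: rtranclp_induct)
    case base
    show ?case using x_in_A0 A0_subset_SA SA_subset_TA by blast
  next
    case (step y z)
    thus ?case using TA_TB_edge TB_TA_edge by blast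
  qed
qed

lemma card_SB_le: "(m - 10) * card SB \<le> m * D"
proof -
  have "finite SB" using finite_V by (simp add: SB_def)
  have "\<forall>b\<in>SB. (m - 10) * card A0 \<le> m * card (N b \<inter> A0)"
  proof
    fix b assume "b \<in> SB"
    have "m * card A0 = m * card (A0 \<inter> N b) + m * card (A0 - N b)"
      using card_Int_Diff[OF finite_A0] by (metis add_mult_distrib2)
    moreover have "A0 \<inter> N b = N b \<inter> A0" by blast
    ultimately show "(m - 10) * card A0 \<le> m * card (N b \<inter> A0)"
      using \<open>b \<in> SB\<close> by (simp add: SB_def diff_mult_distrib, linarith)
  qed
  moreover have "\<forall>a\<in>A0. card (N a \<inter> SB) \<le> D"
  proof
    fix a assume "a \<in> A0"
    have "card (N a \<inter> SB) \<le> deg a" unfolding degree_def by (rule card_mono[OF finite_N]) blast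
    thus "card (N a \<inter> SB) \<le> D" using degree_le_x[of a] \<open>a \<in> A0\<close> by (simp add: A0_def)
  qed
  ultimately have "(m - 10) * card A0 * card SB \<le> m * D * card A0"
    by (rule double_count_edges[OF simple \<open>finite SB\<close> finite_A0])
  thus ?thesis using card_A0_ge m_ge by (simp add: mult.commute mult.left_commute)
qed

end

lemma bipartite_with_sym: "bipartite_with V E A B \<Longrightarrow> bipartite_with V E B A"
  unfolding bipartite_with_def by blast

lemma bipartite_with_triangle_free: "bipartite_with V E A B \<Longrightarrow> E a c \<Longrightarrow> E b c \<Longrightarrow> \<not> E a b"
  unfolding bipartite_with_def by blast

lemma sum_degree_le_num_edges:
  assumes G: "simple_graph V E" and bip: "bipartite_with V E X Y" and "S \<subseteq> X"
  shows "(\<Sum>a\<in>S. degree V E a) \<le> num_edges V E"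
proof -
  let ?P = "SIGMA a:S. neighbours V E a"
  have P: "a \<in> X \<and> q \<in> Y \<and> E a q" if "(a, q) \<in> ?P" for a q
    using that \<open>S \<subseteq> X\<close> bip mem_neighbours_iff[OF G] unfolding bipartite_with_def by blast
  have "finite S" using \<open>S \<subseteq> X\<close> bip simple_graph_finite[OF G] finite_subset
    by (metis bipartite_with_def sup.coboundedI1)
  hence "(\<Sum>a\<in>S. degree V E a) = card ?P"
    using finite_neighbours[OF G] by (simp add: degree_def)
  also have "\<dots> = card ((\<lambda>(a, q). {a, q}) ` ?P)"
  proof (rule card_image[symmetric])
    have "X \<inter> Y = {}" using bip by (simp add: bipartite_with_def)
    thus "inj_on (\<lambda>(a, q). {a, q}) ?P"
      using P unfolding inj_on_def by (fastforce simp: doubleton_eq_iff)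
  qed
  also have "\<dots> \<le> num_edges V E"
  proof -
    have "edge_set V E \<subseteq> Pow V" by (auto simp: edge_set_def)
    hence "finite (edge_set V E)" using simple_graph_finite[OF G] finite_subset by blast
    moreover have "(\<lambda>(a, q). {a, q}) ` ?P \<subseteq> edge_set V E"
      using P simple_graph_edge_vertices[OF G] by (fastforce simp: edge_set_def)
    ultimately show ?thesis unfolding num_edges_def by (rule card_mono)
  qed
  finally show ?thesis .
qed

lemma product_lower_bound:
  fixes p q \<alpha> n sA sB D e :: real
  assumes "0 \<le> p" "0 \<le> q" "0 \<le> (1 - \<alpha>) * n"
    and "(1 - \<alpha>) * n \<le> sA" "(1 - \<alpha>) * n \<le> sB" "q * sB \<le> D" "p * sA * D \<le> e"
  shows "p * q * ((1 - \<alpha>) * n) ^ 2 \<le> e"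
proof -
  have "p * ((1 - \<alpha>) * n) * (q * ((1 - \<alpha>) * n)) \<le> (p * sA) * D"
  proof (rule mult_mono)
    show "p * ((1 - \<alpha>) * n) \<le> p * sA" using assms(1,4) by (rule mult_left_mono[rotated])
    show "q * ((1 - \<alpha>) * n) \<le> D" using assms(2,5,6) mult_left_mono[of _ sB q] by fastforce
    show "0 \<le> p * sA" using assms(1,3,4) by simp
    show "0 \<le> q * ((1 - \<alpha>) * n)" using assms(2,3) by simp
  qed
  thus ?thesis using assms(7) by (simp add: power2_eq_square algebra_simps)
qed

lemma one_minus_le_product:
  fixes \<epsilon> \<alpha> m :: real
  assumes "16 \<le> m" "26 \<le> \<epsilon> * m" "0 \<le> \<alpha>" "4 * \<alpha> \<le> \<epsilon>"
  shows "1 - \<epsilon> \<le> (1 - 3 / m) * (1 - 10 / m) * (1 - \<alpha>) ^ 2"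
proof (cases "\<epsilon> < 1")
  case True
  have "1 - \<epsilon> / 2 \<le> (1 - 3 / m) * (1 - 10 / m)"
  proof -
    have "(1 - 3 / m) * (1 - 10 / m) = 1 - 13 / m + 30 / m ^ 2" using assms(1)
      by (simp add: field_simps power2_eq_square)
    moreover have "13 / m \<le> \<epsilon> / 2" using assms(1,2) by (simp add: field_simps)
    moreover have "0 \<le> 30 / m ^ 2" by simp
    ultimately show ?thesis by linarith
  qed
  moreover have "1 - \<epsilon> / 2 \<le> (1 - \<alpha>) ^ 2"
  proof -
    have "(1 - \<alpha>) ^ 2 = 1 - 2 * \<alpha> + \<alpha> ^ 2" by (simp add: power2_diff)
    thus ?thesis using assms(4) zero_le_power2[of \<alpha>] by linarith
  qed
  moreover have "0 \<le> 1 - \<epsilon> / 2" using True by simp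
  ultimately have "(1 - \<epsilon> / 2) ^ 2 \<le> (1 - 3 / m) * (1 - 10 / m) * (1 - \<alpha>) ^ 2"
    by (metis mult_mono order.trans power2_eq_square)
  moreover have "1 - \<epsilon> \<le> (1 - \<epsilon> / 2) ^ 2" using zero_le_power2[of \<epsilon>] by (simp add: power2_diff)
  ultimately show ?thesis by linarith
next
  case False
  have "0 \<le> (1 - 3 / m) * (1 - 10 / m)" using assms(1) by (intro mult_nonneg_nonneg) (simp_all add: field_simps)
  hence "0 \<le> (1 - 3 / m) * (1 - 10 / m) * (1 - \<alpha>) ^ 2" by simp
  thus ?thesis using False by linarith
qed

locale balanced_bipartite = max_degree_vertex +
  fixes X Y :: "'a set" and n :: nat
  assumes connected: "connected_graph V E" and bipartite: "bipartite_with V E X Y"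
    and x_in_X: "x \<in> X" and card_X: "card X = n" and card_Y: "card Y = n"
begin

lemma N_subset_Y: "a \<in> X \<Longrightarrow> N a \<subseteq> Y"
  and N_subset_X: "b \<in> Y \<Longrightarrow> N b \<subseteq> X"
  using bipartite mem_N_iff unfolding bipartite_with_def by blast+

lemma X_Y_disjoint: "X \<inter> Y = {}" and V_eq: "V = X \<union> Y"
  using bipartite by (auto simp: bipartite_with_def)

lemma finite_X: "finite X" and finite_Y: "finite Y"
  using finite_V V_eq by auto

lemma SA_subset_X: "SA \<subseteq> X"
proof
  fix a assume "a \<in> SA"
  have "m * card (N x - N a) \<le> 3 * D" using \<open>a \<in> SA\<close> by (simp add: SA_def)
  also have "\<dots> < m * D" using m_ge D_ge by simp
  finally have "N x - N a \<noteq> N x" by (auto simp: degree_def)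
  then obtain q where "q \<in> N x" "q \<in> N a" by blast
  thus "a \<in> X" using N_subset_Y[OF x_in_X] N_subset_X edge_sym mem_N_iff by blast
qed

lemma SB_subset_Y: "SB \<subseteq> Y"
proof
  fix b assume "b \<in> SB"
  then obtain a where "a \<in> A0" "a \<in> N b" by (rule SB_has_neighbour_in_A0)
  moreover have "a \<in> X" using \<open>a \<in> A0\<close> A0_subset_SA SA_subset_X by blast
  ultimately show "b \<in> Y" using N_subset_Y edge_sym mem_N_iff by blast
qed

lemma X_subset_TA: "X \<subseteq> TA"
proof
  fix a assume "a \<in> X"
  show "a \<in> TA"
  proof (rule ccontr)
    assume "a \<notin> TA"
    hence "a \<in> TB" using connected_subset_TA_TB[OF connected] V_eq \<open>a \<in> X\<close> by blast
    moreover have "N a - SA = N a" using N_subset_Y[OF \<open>a \<in> X\<close>] SA_subset_X X_Y_disjoint by blast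
    ultimately have "8 * deg a \<le> deg a" by (simp add: TB_def degree_def)
    thus False using degree_ge[of a] V_eq \<open>a \<in> X\<close> d_ge_16K by simp
  qed
qed

lemma Y_subset_TB: "Y \<subseteq> TB"
proof
  fix b assume "b \<in> Y"
  show "b \<in> TB"
  proof (rule ccontr)
    assume "b \<notin> TB"
    hence "b \<in> TA" using connected_subset_TA_TB[OF connected] V_eq \<open>b \<in> Y\<close> by blast
    moreover have "N b - SB = N b" using N_subset_X[OF \<open>b \<in> Y\<close>] SB_subset_Y X_Y_disjoint by blast
    ultimately have "8 * deg b \<le> deg b" by (simp add: TA_def degree_def)
    thus False using degree_ge[of b] V_eq \<open>b \<in> Y\<close> d_ge_16K by simp
  qed
qed

lemma card_X_minus_SA_le: "d * card (X - SA) \<le> 2 * K * n"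
proof -
  have "d * card (X - SA) \<le> 2 * K * card SB"
  proof (rule double_count_edges[OF simple])
    show "finite (X - SA)" "finite SB" using finite_X finite_Y SB_subset_Y finite_subset by auto
    show "\<forall>a\<in>X - SA. d \<le> 2 * card (N a \<inter> SB)"
      using X_subset_TA d_le_twice_card_N_Int by (auto simp: TA_def)
    show "\<forall>b\<in>SB. card (N b \<inter> (X - SA)) \<le> K"
    proof
      fix b assume "b \<in> SB"
      have "card (N b \<inter> (X - SA)) \<le> card (N b - SA)"
        by (rule card_mono[OF finite_Diff[OF finite_N]]) blast
      thus "card (N b \<inter> (X - SA)) \<le> K" using card_N_minus_SA_less[OF \<open>b \<in> SB\<close>] by linarith
    qed
  qed
  also have "\<dots> \<le> 2 * K * n" using card_mono[OF finite_Y SB_subset_Y] card_Y by simp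
  finally show ?thesis .
qed

lemma card_Y_minus_SB_le: "d * card (Y - SB) \<le> 2 * K * n"
proof -
  have "d * card (Y - SB) \<le> 2 * K * card SA"
  proof (rule double_count_edges[OF simple])
    show "finite (Y - SB)" "finite SA" using finite_X finite_Y SA_subset_X finite_subset by auto
    show "\<forall>b\<in>Y - SB. d \<le> 2 * card (N b \<inter> SA)"
      using Y_subset_TB d_le_twice_card_N_Int by (auto simp: TB_def)
    show "\<forall>a\<in>SA. card (N a \<inter> (Y - SB)) \<le> K"
    proof
      fix a assume "a \<in> SA"
      have "card (N a \<inter> (Y - SB)) \<le> card (N a - SB)"
        by (rule card_mono[OF finite_Diff[OF finite_N]]) blast
      thus "card (N a \<inter> (Y - SB)) \<le> K" using card_N_minus_SB_less[OF \<open>a \<in> SA\<close>] by linarith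
    qed
  qed
  also have "\<dots> \<le> 2 * K * n" using card_mono[OF finite_X SA_subset_X] card_X by simp
  finally show ?thesis .
qed

lemma card_SA_mult_le_num_edges: "card SA * ((m - 3) * D) \<le> m * num_edges V E"
proof -
  have "(m - 3) * D \<le> m * deg a" if "a \<in> SA" for a
  proof -
    have "D = card (N x \<inter> N a) + card (N x - N a)"
      using card_Int_Diff[OF finite_N] by (simp add: degree_def)
    moreover have "card (N x \<inter> N a) \<le> deg a" unfolding degree_def by (rule card_mono[OF finite_N]) blast
    moreover have "m * card (N x - N a) \<le> 3 * D" using that by (simp add: SA_def)
    ultimately have "m * D \<le> m * deg a + 3 * D" by (metis add_mult_distrib2 add_mono mult_le_mono2)
    thus ?thesis by (simp add: diff_mult_distrib)
  qed
  hence "card SA * ((m - 3) * D) \<le> (\<Sum>a\<in>SA. m * deg a)"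
    using sum_mono[of SA "\<lambda>_. (m - 3) * D"] by simp
  also have "\<dots> \<le> m * num_edges V E"
    using sum_degree_le_num_edges[OF simple bipartite SA_subset_X] by (simp add: sum_distrib_left[symmetric])
  finally show ?thesis .
qed

lemma num_edges_ge:
  fixes \<epsilon> :: real
  assumes "26 \<le> \<epsilon> * m" "8 * K \<le> \<epsilon> * d"
  shows "(1 - \<epsilon>) * real n ^ 2 \<le> real (num_edges V E)"
proof -
  define \<alpha> where "\<alpha> = 2 * K / d"
  have "0 < d" using d_ge_16K by linarith
  have \<alpha>: "0 \<le> \<alpha>" "4 * \<alpha> \<le> \<epsilon>" "\<alpha> \<le> 1"
    using \<open>0 < d\<close> assms(2) d_ge_16K by (auto simp: \<alpha>_def field_simps)
  have card_diff: "card (X - SA) = n - card SA" "card (Y - SB) = n - card SB"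
    "card SA \<le> n" "card SB \<le> n"
    using card_Diff_subset[OF finite_subset[OF SA_subset_X finite_X] SA_subset_X]
      card_Diff_subset[OF finite_subset[OF SB_subset_Y finite_Y] SB_subset_Y]
      card_mono[OF finite_X SA_subset_X] card_mono[OF finite_Y SB_subset_Y]
    by (simp_all add: card_X card_Y)
  have sA: "(1 - \<alpha>) * n \<le> card SA"
  proof -
    have "d * card (X - SA) \<le> 2 * K * n" by (rule card_X_minus_SA_le)
    hence "real (card (X - SA)) \<le> \<alpha> * n" using \<open>0 < d\<close> unfolding \<alpha>_def
      by (simp add: field_simps flip: of_nat_mult) 
    thus ?thesis using card_diff by (simp add: of_nat_diff algebra_simps)
  qed
  have sB: "(1 - \<alpha>) * n \<le> card SB"
  proof -
    have "d * card (Y - SB) \<le> 2 * K * n" by (rule card_Y_minus_SB_le)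
    hence "real (card (Y - SB)) \<le> \<alpha> * n" using \<open>0 < d\<close> unfolding \<alpha>_def
      by (simp add: field_simps flip: of_nat_mult)
    thus ?thesis using card_diff by (simp add: of_nat_diff algebra_simps)
  qed
  have D: "(1 - 10 / m) * card SB \<le> D"
  proof -
    have "real (m - 10) = real m - 10" using m_ge by simp
    hence "(real m - 10) * card SB \<le> m * D" using of_nat_mono[OF card_SB_le, where 'a = real] by simp
    thus ?thesis using m_ge by (simp add: field_simps)
  qed
  have e: "(1 - 3 / m) * card SA * D \<le> num_edges V E"
  proof -
    have "real (m - 3) = real m - 3" using m_ge by simp
    hence "card SA * ((real m - 3) * D) \<le> m * num_edges V E"
      using of_nat_mono[OF card_SA_mult_le_num_edges, where 'a = real] by simp
    thus ?thesis using m_ge by (simp add: field_simps)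
  qed
  have "0 \<le> 1 - 3 / m" "0 \<le> 1 - 10 / m" using m_ge by (simp_all add: field_simps)
  moreover have "0 \<le> (1 - \<alpha>) * n" using \<alpha>(3) by simp
  ultimately
  have product: "(1 - 3 / m) * (1 - 10 / m) * ((1 - \<alpha>) * n) ^ 2 \<le> num_edges V E"
    using product_lower_bound[OF _ _ _ sA sB D e] by blast
  have "(1 - \<epsilon>) * real n ^ 2 \<le> (1 - 3 / m) * (1 - 10 / m) * (1 - \<alpha>) ^ 2 * real n ^ 2"
    using one_minus_le_product[of m \<epsilon> \<alpha>] m_ge assms(1) \<alpha> by (intro mult_right_mono) simp_all
  also have "\<dots> \<le> num_edges V E" using product by (simp add: power_mult_distrib mult.assoc)
  finally show ?thesis .
qed

end

lemma bipartite_biclaw_free_num_edges_ge: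
  fixes \<epsilon> :: real and m d :: nat
  assumes G: "simple_graph V E" "connected_graph V E" "bipartite_with V E A B"
    "card A = n" "card B = n" "induced_biclaw_free t t V E" "min_degree_ge V E d"
    and m: "16 \<le> m" "26 \<le> \<epsilon> * m"
    and d: "2 * t * m < d" "2 * m \<le> d" "16 * (t * (2 * m) ^ t + 1) \<le> d" "8 * (t * (2 * m) ^ t) \<le> \<epsilon> * d"
  shows "(1 - \<epsilon>) * real n ^ 2 \<le> real (num_edges V E)"
proof -
  have "finite V" "V \<noteq> {}"
    using G(1,2) by (auto simp: simple_graph_finite connected_graph_def)
  hence "Max (degree V E ` V) \<in> degree V E ` V" by (intro Max_in) auto
  then obtain x where "x \<in> V" "degree V E x = Max (degree V E ` V)" by auto
  hence x: "x \<in> V" "\<And>v. v \<in> V \<Longrightarrow> degree V E v \<le> degree V E x"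
    using \<open>finite V\<close> by auto
  have side: "(1 - \<epsilon>) * real n ^ 2 \<le> real (num_edges V E)"
    if "bipartite_with V E X Y" "x \<in> X" "card X = n" "card Y = n" for X Y
  proof -
    interpret balanced_bipartite V E t m d x X Y n
      using G m d x that bipartite_with_triangle_free[OF that(1)]
      by unfold_locales (assumption | linarith)+
    show ?thesis
      by (rule num_edges_ge) (use m(2) d(4) in \<open>simp_all add: K_def\<close>)
  qed
  have "x \<in> A \<or> x \<in> B" using G(3) x(1) unfolding bipartite_with_def by blast
  thus ?thesis
    using side[OF G(3) _ G(4,5)] side[OF bipartite_with_sym[OF G(3)] _ G(5,4)] by blast
qed

theorem mainTheorem2:
  fixes t :: nat and \<epsilon> :: real
  assumes "t > 0" and "\<epsilon> > 0"
  shows "\<exists>d::nat. d > 0 \<and>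
    (\<forall>(V :: nat set) E A B n.
       simple_graph V E \<and> connected_graph V E \<and> bipartite_with V E A B \<and>
       card A = n \<and> card B = n \<and> induced_biclaw_free t t V E \<and> min_degree_ge V E d
       \<longrightarrow> real (num_edges V E) \<ge> (1 - \<epsilon>) * real n ^ 2)"
proof -
  define m where "m = 16 + nat \<lceil>26 / \<epsilon>\<rceil>"
  define d where "d = 2 * (t + 1) * m + 16 * (t * (2 * m) ^ t + 1) + nat \<lceil>8 * (t * (2 * m) ^ t) / \<epsilon>\<rceil>"
  have "26 / \<epsilon> \<le> m" using real_nat_ceiling_ge[of "26 / \<epsilon>"] by (simp add: m_def)
  hence m: "16 \<le> m" "26 \<le> \<epsilon> * m" using assms(2) by (auto simp: m_def field_simps)
  have d: "2 * t * m < d" "2 * m \<le> d" "16 * (t * (2 * m) ^ t + 1) \<le> d"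
    using \<open>16 \<le> m\<close> by (auto simp: d_def)
  have "nat \<lceil>8 * (t * (2 * m) ^ t) / \<epsilon>\<rceil> \<le> d" by (simp add: d_def)
  hence "8 * (t * (2 * m) ^ t) / \<epsilon> \<le> d"
    using real_nat_ceiling_ge[of "8 * (t * (2 * m) ^ t) / \<epsilon>"] of_nat_mono order_trans by blast
  hence d_\<epsilon>: "8 * (t * (2 * m) ^ t) \<le> \<epsilon> * d" using assms(2) by (simp add: field_simps)
  show ?thesis
  proof (intro exI conjI allI impI)
    show "0 < d" using d(2) m(1) by linarith
    fix V :: "nat set" and E A B n
    assume "simple_graph V E \<and> connected_graph V E \<and> bipartite_with V E A B \<and>
       card A = n \<and> card B = n \<and> induced_biclaw_free t t V E \<and> min_degree_ge V E d"
    thus "(1 - \<epsilon>) * real n ^ 2 \<le> real (num_edges V E)"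
      using bipartite_biclaw_free_num_edges_ge[OF _ _ _ _ _ _ _ m d d_\<epsilon>] by blast
  qed
qed

end
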